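(* Let $s\in(0,1)$, let $\Omega\subset\mathbb{R}^N$ be a bounded open set of class $C^{1,1}$, and let $X\in C^0(\overline\Omega;\mathbb{R}^N)$. Let $u\in C^s(\overline\Omega)\cap C^1(\Omega)$ with $u=0$ on $\mathbb{R}^N\setminus\Omega$, such that $\psi:=u/\delta^s$ satisfies, for some $\alpha\in(0,1)$ and $c>0$: - $\|\psi\|_{C^\alpha(\overline\Omega)}\le c$; - $|\nabla\psi(x)|\le c\,\delta(x)^{\alpha-1}$ for all $x\in\Omega$. Let $U_k:=u\,(\zeta_k\circ\delta)$ and $g^0_k:=\nabla U_k\cdot X$. Then there is a constant $C>0$ such that $$k^{s-1}\big|g^0_k(\Psi(\sigma,r/k))\big|\le C(r^{s-1}+r^{s-1+\alpha})$$ for all $k\in\mathbb{N}$, $\sigma\in\partial\Omega$ and $0<r<k\varepsilon_\Omega$. Moreover, $$\lim_{k\to\infty}k^{s-1}g^0_k(\Psi(\sigma,r/k))=h'(r)\,\psi(\sigma)\,X(\sigma)\cdot\nu(\sigma)$$ for every $\sigma\in\partial\Omega$ and $r>0$.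
   Context: $\delta\in C^{1,1}(\mathbb{R}^N)$ is a fixed function equal to the signed distance $\mathrm{dist}(\cdot,\mathbb{R}^N\setminus\Omega)-\mathrm{dist}(\cdot,\Omega)$ near $\partial\Omega$, positive in $\Omega$, negative in $\mathbb{R}^N\setminus\overline\Omega$. $\nu$ is the interior unit normal on $\partial\Omega$, and $\psi$ on $\partial\Omega$ is its continuous extension. $\varepsilon_\Omega>0$ is fixed so that $\Psi:\partial\Omega\times(-\varepsilon_\Omega,\varepsilon_\Omega)\to\{x:|\delta(x)|<\varepsilon_\Omega\}$, $\Psi(\sigma,r)=\sigma+r\nu(\sigma)$, is a bi-Lipschitz bijection with $\delta(\Psi(\sigma,r))=r$. Fix $\rho\in C^\infty_c((-2,2))$ with $0\le\rho\le1$ and $\rho\equiv1$ on $(-1,1)$. Put $\zeta=1-\rho$, $\rho_k(t)=\rho(kt)$, $\zeta_k=1-\rho_k$, and $h(r)=r_+^s\zeta(r)$. *)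

theory Defs
  imports "HOL-Analysis.Analysis"
begin

definition hoelder_on :: "real \<Rightarrow> real \<Rightarrow> 'a::metric_space set \<Rightarrow> ('a \<Rightarrow> real) \<Rightarrow> bool" where
  "hoelder_on a H S f \<longleftrightarrow> (\<forall>x\<in>S. \<forall>y\<in>S. \<bar>f x - f y\<bar> \<le> H * dist x y powr a)"

definition in_C_alpha :: "real \<Rightarrow> 'a::metric_space set \<Rightarrow> ('a \<Rightarrow> real) \<Rightarrow> bool" where
  "in_C_alpha a S f \<longleftrightarrow> (\<exists>M H. (\<forall>x\<in>S. \<bar>f x\<bar> \<le> M) \<and> hoelder_on a H S f)"

definition C_alpha_norm_le :: "real \<Rightarrow> 'a::metric_space set \<Rightarrow> ('a \<Rightarrow> real) \<Rightarrow> real \<Rightarrow> bool" where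
  "C_alpha_norm_le a S f c \<longleftrightarrow>
     (\<exists>M H. (\<forall>x\<in>S. \<bar>f x\<bar> \<le> M) \<and> hoelder_on a H S f \<and> M + H \<le> c)"

definition C1_on :: "'a::euclidean_space set \<Rightarrow> ('a \<Rightarrow> real) \<Rightarrow> bool" where
  "C1_on S f \<longleftrightarrow> (\<exists>G. (\<forall>x\<in>S. (f has_derivative (\<lambda>v. G x \<bullet> v)) (at x)) \<and> continuous_on S G)"

definition C11_global :: "('a::euclidean_space \<Rightarrow> real) \<Rightarrow> bool" where
  "C11_global f \<longleftrightarrow> (\<exists>G L. (\<forall>x. (f has_derivative (\<lambda>v. G x \<bullet> v)) (at x)) \<and>
                             (\<forall>x y. norm (G x - G y) \<le> L * dist x y))"

definition C11_domain :: "'a::euclidean_space set \<Rightarrow> bool" where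
  "C11_domain \<Omega> \<longleftrightarrow> open \<Omega> \<and>
     (\<forall>x0\<in>frontier \<Omega>. \<exists>r>0. \<exists>\<phi> G L.
        (\<forall>x\<in>ball x0 r. (\<phi> has_derivative (\<lambda>v. G x \<bullet> v)) (at x) \<and> G x \<noteq> 0) \<and>
        (\<forall>x\<in>ball x0 r. \<forall>y\<in>ball x0 r. norm (G x - G y) \<le> L * dist x y) \<and>
        \<Omega> \<inter> ball x0 r = {x\<in>ball x0 r. \<phi> x > 0})"

definition smooth_real :: "(real \<Rightarrow> real) \<Rightarrow> bool" where
  "smooth_real f \<longleftrightarrow> (\<exists>D. D 0 = f \<and> (\<forall>n x. (D n has_real_derivative D (Suc n) x) (at x)))"

end

theory Submission
  imports Defs
begin

text \<open>Write \<open>p = \<Psi>(\<sigma>, r/k)\<close>, so that \<open>\<delta> p = r/k\<close> and \<open>U\<^sub>k = \<psi> \<delta>\<^sup>s (1 - \<rho>(k\<delta>))\<close> near \<open>p\<close>.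
  By the product and chain rules, \<open>k\<^sup>s\<^sup>-\<^sup>1 g\<^sup>0\<^sub>k(p)\<close> splits into
  \<open>(r\<^sup>s/k)(1 - \<rho> r) \<nabla>\<psi>(p)\<cdot>X(p)\<close> and \<open>h'(r) \<psi>(p) \<nabla>\<delta>(p)\<cdot>X(p)\<close>: every power of \<open>k\<close> coming
  from \<open>\<delta>\<^sup>s\<close> and from \<open>\<rho>(k\<delta>)\<close> is absorbed by the prefactor \<open>k\<^sup>s\<^sup>-\<^sup>1\<close>.
  The gradient bound on \<open>\<psi>\<close> makes the first term \<open>O(r\<^sup>s\<^sup>-\<^sup>1\<^sup>+\<^sup>\<alpha> k\<^sup>-\<^sup>\<alpha>)\<close>, while
  \<open>|h'(r)| = O(r\<^sup>s\<^sup>-\<^sup>1)\<close> because \<open>\<rho>'\<close> vanishes beyond 2. Letting \<open>k \<rightarrow> \<infinity>\<close>, the first term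
  disappears, \<open>p \<rightarrow> \<sigma>\<close>, and \<open>\<nabla>\<delta>(\<sigma>) = \<nu>(\<sigma>)\<close> gives the limit.\<close>

lemma powr_rescale:
  fixes k r :: real
  assumes "0 < k" "0 < r"
  shows "k powr a * (r / k) powr b = r powr b * k powr (a - b)"
  using assms by (simp add: powr_divide powr_diff)

lemma has_real_derivative_outside_support:
  assumes "(f has_real_derivative f') (at t)" "t \<notin> closure {x. f x \<noteq> 0}"
  shows "f' = 0"
proof -
  have "(f has_real_derivative 0) (at t)"
  proof (rule has_field_derivative_transform_within_open[OF DERIV_const])
    show "open (- closure {x. f x \<noteq> 0})" by (simp add: open_Compl)
    show "t \<in> - closure {x. f x \<noteq> 0}" using assms(2) by simp
    show "0 = f x" if "x \<in> - closure {x. f x \<noteq> 0}" for x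
      using that closure_subset by (metis (mono_tags) ComplD mem_Collect_eq subsetD)
  qed
  then show ?thesis using assms(1) DERIV_unique by blast
qed

lemma signed_distance_pos_imp_mem:
  fixes \<Omega> :: "'a::metric_space set"
  assumes "open \<Omega>" "0 < \<eta>"
    and sdist: "\<And>x. infdist x (frontier \<Omega>) < \<eta> \<Longrightarrow> \<delta> x = infdist x (- \<Omega>) - infdist x \<Omega>"
    and neg: "\<And>x. x \<notin> closure \<Omega> \<Longrightarrow> \<delta> x < 0"
    and "0 < \<delta> p"
  shows "p \<in> \<Omega>"
proof (rule ccontr)
  assume "p \<notin> \<Omega>"
  have "p \<in> closure \<Omega>" using neg \<open>0 < \<delta> p\<close> by force
  with \<open>p \<notin> \<Omega>\<close> \<open>open \<Omega>\<close> have "p \<in> frontier \<Omega>"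
    by (simp add: frontier_def interior_open)
  then have "\<delta> p = infdist p (- \<Omega>) - infdist p \<Omega>"
    using sdist \<open>0 < \<eta>\<close> by simp
  also have "\<dots> = 0"
    using \<open>p \<notin> \<Omega>\<close> \<open>p \<in> closure \<Omega>\<close> in_closure_iff_infdist_zero[of \<Omega> p]
    by fastforce
  finally show False using \<open>0 < \<delta> p\<close> by simp
qed

lemma frechet_derivative_cutoff_product:
  fixes \<delta> \<psi> u :: "'a::euclidean_space \<Rightarrow> real" and \<rho> :: "real \<Rightarrow> real"
  assumes "open \<Omega>" "p \<in> \<Omega>" "0 < \<delta> p"
    and u_eq: "\<And>x. x \<in> \<Omega> \<Longrightarrow> u x = \<psi> x * \<delta> x powr s"
    and \<delta>_deriv: "(\<delta> has_derivative (\<lambda>v. G \<bullet> v)) (at p)"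
    and \<psi>_diff: "\<psi> differentiable (at p)"
    and \<rho>_deriv: "(\<rho> has_real_derivative \<rho>') (at (k * \<delta> p))"
  shows "frechet_derivative (\<lambda>x. u x * (1 - \<rho> (k * \<delta> x))) (at p) v =
     (frechet_derivative \<psi> (at p) v * \<delta> p powr s + \<psi> p * (s * \<delta> p powr (s - 1) * (G \<bullet> v)))
       * (1 - \<rho> (k * \<delta> p)) - u p * (\<rho>' * (k * (G \<bullet> v)))"
proof -
  have "((\<lambda>t. t powr s) has_derivative (\<lambda>t. s * \<delta> p powr (s - 1) * t)) (at (\<delta> p))"
    using has_real_derivative_powr[OF \<open>0 < \<delta> p\<close>, of s] by (simp add: has_field_derivative_def)
  from has_derivative_compose[OF \<delta>_deriv this]
  have power: "((\<lambda>x. \<delta> x powr s) has_derivative (\<lambda>v. s * \<delta> p powr (s - 1) * (G \<bullet> v))) (at p)" .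
  have "(\<rho> has_derivative (\<lambda>t. \<rho>' * t)) (at (k * \<delta> p))"
    using \<rho>_deriv by (simp add: has_field_derivative_def)
  from has_derivative_compose[OF has_derivative_mult_right[OF \<delta>_deriv] this]
  have cutoff: "((\<lambda>x. 1 - \<rho> (k * \<delta> x)) has_derivative (\<lambda>v. 0 - \<rho>' * (k * (G \<bullet> v)))) (at p)"
    by (intro has_derivative_diff has_derivative_const)
  have "((\<lambda>x. (\<psi> x * \<delta> x powr s) * (1 - \<rho> (k * \<delta> x))) has_derivative
      (\<lambda>v. (\<psi> p * \<delta> p powr s) * (0 - \<rho>' * (k * (G \<bullet> v)))
        + (\<psi> p * (s * \<delta> p powr (s - 1) * (G \<bullet> v)) + frechet_derivative \<psi> (at p) v * \<delta> p powr s)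
          * (1 - \<rho> (k * \<delta> p)))) (at p)"
    using has_derivative_mult[OF has_derivative_mult[OF frechet_derivative_works[THEN iffD1, OF \<psi>_diff] power] cutoff] .
  then have "((\<lambda>x. u x * (1 - \<rho> (k * \<delta> x))) has_derivative
      (\<lambda>v. (\<psi> p * \<delta> p powr s) * (0 - \<rho>' * (k * (G \<bullet> v)))
        + (\<psi> p * (s * \<delta> p powr (s - 1) * (G \<bullet> v)) + frechet_derivative \<psi> (at p) v * \<delta> p powr s)
          * (1 - \<rho> (k * \<delta> p)))) (at p)"
    by (rule has_derivative_transform_within_open[OF _ \<open>open \<Omega>\<close> \<open>p \<in> \<Omega>\<close>]) (simp add: u_eq)
  from frechet_derivative_at[OF this, symmetric] show ?thesis
    using u_eq[OF \<open>p \<in> \<Omega>\<close>] by (simp add: algebra_simps)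
qed

locale boundary_cutoff =
  fixes \<Omega> :: "'a::euclidean_space set" and \<delta> :: "'a \<Rightarrow> real" and G \<nu> :: "'a \<Rightarrow> 'a"
    and \<epsilon> :: real and \<rho> \<rho>' :: "real \<Rightarrow> real" and s \<alpha> c :: real
    and X :: "'a \<Rightarrow> 'a" and u \<psi> :: "'a \<Rightarrow> real"
  assumes open_domain: "open \<Omega>" and bounded_domain: "bounded \<Omega>"
    and \<delta>_deriv: "\<And>x. (\<delta> has_derivative (\<lambda>v. G x \<bullet> v)) (at x)"
    and G_cont: "continuous_on UNIV G"
    and \<nu>_deriv: "\<And>\<sigma>. \<sigma> \<in> frontier \<Omega> \<Longrightarrow> (\<delta> has_derivative (\<lambda>v. \<nu> \<sigma> \<bullet> v)) (at \<sigma>)"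
    and \<epsilon>_pos: "0 < \<epsilon>"
    and normal_segment: "\<And>\<sigma> t. \<sigma> \<in> frontier \<Omega> \<Longrightarrow> 0 < t \<Longrightarrow> t < \<epsilon> \<Longrightarrow>
                           \<sigma> + t *\<^sub>R \<nu> \<sigma> \<in> \<Omega> \<and> \<delta> (\<sigma> + t *\<^sub>R \<nu> \<sigma>) = t"
    and \<rho>_deriv: "\<And>t. (\<rho> has_real_derivative \<rho>' t) (at t)"
    and \<rho>'_cont: "continuous_on {0..2} \<rho>'"
    and \<rho>'_vanish: "\<And>t. 2 \<le> t \<Longrightarrow> \<rho>' t = 0"
    and \<rho>_range: "\<And>t. 0 \<le> \<rho> t \<and> \<rho> t \<le> 1"
    and s_pos: "0 < s" and \<alpha>_pos: "0 < \<alpha>" and c_nonneg: "0 \<le> c"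
    and X_cont: "continuous_on (closure \<Omega>) X"
    and u_eq: "\<And>x. x \<in> \<Omega> \<Longrightarrow> u x = \<psi> x * \<delta> x powr s"
    and \<psi>_cont: "continuous_on (closure \<Omega>) \<psi>"
    and \<psi>_diff: "\<And>x. x \<in> \<Omega> \<Longrightarrow> \<psi> differentiable (at x)"
    and \<psi>_grad: "\<And>x v. x \<in> \<Omega> \<Longrightarrow>
                   \<bar>frechet_derivative \<psi> (at x) v\<bar> \<le> c * \<delta> x powr (\<alpha> - 1) * norm v"
begin

abbreviation \<Psi> :: "'a \<Rightarrow> real \<Rightarrow> 'a" where
  "\<Psi> \<sigma> t \<equiv> \<sigma> + t *\<^sub>R \<nu> \<sigma>"

abbreviation g0 :: "nat \<Rightarrow> 'a \<Rightarrow> real" where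
  "g0 k x \<equiv> frechet_derivative (\<lambda>x. u x * (1 - \<rho> (real k * \<delta> x))) (at x) (X x)"

definition profile_deriv :: "real \<Rightarrow> real" where
  "profile_deriv r = s * r powr (s - 1) * (1 - \<rho> r) - r powr s * \<rho>' r"

lemma deriv_profile:
  assumes "0 < r"
  shows "deriv (\<lambda>r. max r 0 powr s * (1 - \<rho> r)) r = profile_deriv r"
proof (rule DERIV_imp_deriv)
  have "((\<lambda>t. t powr s * (1 - \<rho> t)) has_real_derivative
          s * r powr (s - 1) * (1 - \<rho> r) + (0 - \<rho>' r) * r powr s) (at r)"
    by (intro DERIV_mult has_real_derivative_powr DERIV_diff DERIV_const \<rho>_deriv assms)
  then have "((\<lambda>t. max t 0 powr s * (1 - \<rho> t)) has_real_derivative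
          s * r powr (s - 1) * (1 - \<rho> r) + (0 - \<rho>' r) * r powr s) (at r)"
    by (rule has_field_derivative_transform_within_open[of _ _ _ "{0<..}"]) (use assms in auto)
  then show "((\<lambda>r. max r 0 powr s * (1 - \<rho> r)) has_real_derivative profile_deriv r) (at r)"
    by (simp add: profile_deriv_def algebra_simps)
qed

lemma profile_deriv_bound:
  obtains B where "0 \<le> B" "\<And>r. 0 < r \<Longrightarrow> \<bar>profile_deriv r\<bar> \<le> B * r powr (s - 1)"
proof -
  obtain M where M: "0 \<le> M" "\<And>t. t \<in> {0..2} \<Longrightarrow> \<bar>\<rho>' t\<bar> \<le> M"
    using continuous_on_compact_bound[OF compact_Icc \<rho>'_cont] by (metis real_norm_def)
  have "\<bar>profile_deriv r\<bar> \<le> (s + 2 * M) * r powr (s - 1)" if "0 < r" for r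
  proof -
    have "\<bar>1 - \<rho> r\<bar> \<le> 1" using \<rho>_range[of r] by simp
    then have first: "\<bar>s * r powr (s - 1) * (1 - \<rho> r)\<bar> \<le> s * r powr (s - 1)"
      using s_pos by (simp add: abs_mult mult_left_le)
    have second: "\<bar>r powr s * \<rho>' r\<bar> \<le> 2 * M * r powr (s - 1)"
    proof (cases "r < 2")
      case True
      have "r powr s = r * r powr (s - 1)" using \<open>0 < r\<close> by (simp add: powr_diff)
      also have "\<dots> \<le> 2 * r powr (s - 1)" using True by (intro mult_right_mono) auto
      finally have "r powr s \<le> 2 * r powr (s - 1)" .
      then have "r powr s * \<bar>\<rho>' r\<bar> \<le> 2 * r powr (s - 1) * M"
        using M(2)[of r] True \<open>0 < r\<close> by (intro mult_mono) auto
      then show ?thesis by (simp add: abs_mult mult_ac)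
    qed (use \<rho>'_vanish M(1) in simp)
    show ?thesis unfolding profile_deriv_def using first second by (simp add: algebra_simps)
  qed
  then show thesis using that[of "s + 2 * M"] s_pos M(1) by simp
qed

lemma normal_eq_gradient:
  assumes "\<sigma> \<in> frontier \<Omega>"
  shows "\<nu> \<sigma> = G \<sigma>"
proof -
  have "(\<lambda>v. G \<sigma> \<bullet> v) = (\<lambda>v. \<nu> \<sigma> \<bullet> v)"
    using has_derivative_unique[OF \<delta>_deriv \<nu>_deriv[OF assms]] .
  then show ?thesis by (metis vector_eq_rdot)
qed

lemma Psi_scaled:
  assumes "\<sigma> \<in> frontier \<Omega>" "0 < r" "r < real k * \<epsilon>"
  shows "0 < real k" and "\<Psi> \<sigma> (r / real k) \<in> \<Omega>" and "\<delta> (\<Psi> \<sigma> (r / real k)) = r / real k"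
proof -
  show k: "0 < real k" using assms \<epsilon>_pos by (cases k) auto
  have "r / real k < \<epsilon>" using assms k by (simp add: divide_less_eq mult.commute)
  then show "\<Psi> \<sigma> (r / real k) \<in> \<Omega>" "\<delta> (\<Psi> \<sigma> (r / real k)) = r / real k"
    using normal_segment[OF assms(1)] assms(2) k by auto
qed

lemma scaled_cutoff_gradient:
  assumes "\<sigma> \<in> frontier \<Omega>" "0 < r" "r < real k * \<epsilon>"
  defines "p \<equiv> \<Psi> \<sigma> (r / real k)"
  shows "real k powr (s - 1) * g0 k p =
    r powr s / real k * (1 - \<rho> r) * frechet_derivative \<psi> (at p) (X p)
      + profile_deriv r * \<psi> p * (G p \<bullet> X p)"
proof -
  have k: "0 < real k" and p: "p \<in> \<Omega>" "\<delta> p = r / real k"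
    using Psi_scaled[OF assms(1-3)] unfolding p_def by auto
  have kp: "real k * \<delta> p = r" using p(2) k by simp
  have g0_at_p: "g0 k p = (frechet_derivative \<psi> (at p) (X p) * \<delta> p powr s
        + \<psi> p * (s * \<delta> p powr (s - 1) * (G p \<bullet> X p))) * (1 - \<rho> r)
      - \<psi> p * \<delta> p powr s * (\<rho>' r * (real k * (G p \<bullet> X p)))"
  proof -
    have pos: "0 < \<delta> p" using p(2) k assms(2) by simp
    have der: "(\<rho> has_real_derivative \<rho>' r) (at (real k * \<delta> p))"
      using \<rho>_deriv unfolding kp .
    show ?thesis
      using frechet_derivative_cutoff_product[OF open_domain p(1) pos u_eq \<delta>_deriv \<psi>_diff[OF p(1)] der]
        u_eq[OF p(1)] unfolding kp by simp
  qed
  have "real k powr (s - 1) * g0 k p =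
      (real k powr (s - 1) * (r / real k) powr s) * frechet_derivative \<psi> (at p) (X p) * (1 - \<rho> r)
      + \<psi> p * s * (real k powr (s - 1) * (r / real k) powr (s - 1)) * (G p \<bullet> X p) * (1 - \<rho> r)
      - \<psi> p * (real k powr (s - 1) * (r / real k) powr s * real k) * \<rho>' r * (G p \<bullet> X p)"
    unfolding g0_at_p p(2) by (simp add: algebra_simps)
  also have "\<dots> = r powr s / real k * frechet_derivative \<psi> (at p) (X p) * (1 - \<rho> r)
      + \<psi> p * s * r powr (s - 1) * (G p \<bullet> X p) * (1 - \<rho> r)
      - \<psi> p * r powr s * \<rho>' r * (G p \<bullet> X p)"
    using k assms(2) by (simp add: powr_rescale powr_minus_divide powr_diff)
  finally show ?thesis by (simp add: profile_deriv_def algebra_simps)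
qed

lemma scaled_remainder_bound:
  assumes "\<sigma> \<in> frontier \<Omega>" "0 < r" "r < real k * \<epsilon>"
    and X_bound: "\<And>x. x \<in> closure \<Omega> \<Longrightarrow> norm (X x) \<le> M"
  defines "p \<equiv> \<Psi> \<sigma> (r / real k)"
  shows "\<bar>r powr s / real k * (1 - \<rho> r) * frechet_derivative \<psi> (at p) (X p)\<bar>
           \<le> c * M * r powr (s - 1 + \<alpha>) * real k powr (- \<alpha>)"
proof -
  have k: "0 < real k" and p: "p \<in> \<Omega>" "\<delta> p = r / real k"
    using Psi_scaled[OF assms(1-3)] unfolding p_def by auto
  have "\<bar>frechet_derivative \<psi> (at p) (X p)\<bar> \<le> c * (r / real k) powr (\<alpha> - 1) * norm (X p)"
    using \<psi>_grad[OF p(1)] unfolding p(2) .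
  also have "\<dots> \<le> c * (r / real k) powr (\<alpha> - 1) * M"
    using X_bound[of p] p(1) closure_subset c_nonneg by (intro mult_left_mono) auto
  finally have grad: "\<bar>frechet_derivative \<psi> (at p) (X p)\<bar> \<le> c * (r / real k) powr (\<alpha> - 1) * M" .
  have "\<bar>1 - \<rho> r\<bar> \<le> 1" using \<rho>_range[of r] by simp
  then have "\<bar>r powr s / real k * (1 - \<rho> r) * frechet_derivative \<psi> (at p) (X p)\<bar>
      \<le> r powr s / real k * 1 * (c * (r / real k) powr (\<alpha> - 1) * M)"
    unfolding abs_mult using grad k by (intro mult_mono) auto
  also have "\<dots> = c * M * r powr s * (real k powr (- 1) * (r / real k) powr (\<alpha> - 1))"
    using k by (simp add: powr_minus_divide)
  also have "\<dots> = c * M * (r powr s * r powr (\<alpha> - 1)) * real k powr (- \<alpha>)"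
    using powr_rescale[OF k assms(2), of "- 1" "\<alpha> - 1"] by simp
  also have "\<dots> = c * M * r powr (s - 1 + \<alpha>) * real k powr (- \<alpha>)"
    using powr_add[of r s "\<alpha> - 1"] by (simp add: algebra_simps)
  finally show ?thesis .
qed

lemma bounded_on_closure:
  assumes "continuous_on (closure \<Omega>) f"
  obtains M where "0 \<le> M" "\<And>x. x \<in> closure \<Omega> \<Longrightarrow> norm (f x) \<le> M"
  using continuous_on_compact_bound[OF _ assms] bounded_domain compact_closure by blast

theorem scaled_cutoff_gradient_bound:
  "\<exists>C>0. \<forall>k. \<forall>\<sigma>\<in>frontier \<Omega>. \<forall>r. 0 < r \<and> r < real k * \<epsilon> \<longrightarrow>
     real k powr (s - 1) * \<bar>g0 k (\<Psi> \<sigma> (r / real k))\<bar> \<le> C * (r powr (s - 1) + r powr (s - 1 + \<alpha>))"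
proof -
  obtain MX where MX: "0 \<le> MX" "\<And>x. x \<in> closure \<Omega> \<Longrightarrow> norm (X x) \<le> MX"
    using bounded_on_closure[OF X_cont] by blast
  have "continuous_on (closure \<Omega>) (\<lambda>x. \<psi> x * (G x \<bullet> X x))"
    using continuous_on_subset[OF G_cont] by (intro continuous_intros \<psi>_cont X_cont) auto
  then obtain M where M: "0 \<le> M" "\<And>x. x \<in> closure \<Omega> \<Longrightarrow> norm (\<psi> x * (G x \<bullet> X x)) \<le> M"
    using bounded_on_closure by blast
  obtain B where B: "0 \<le> B" "\<And>r. 0 < r \<Longrightarrow> \<bar>profile_deriv r\<bar> \<le> B * r powr (s - 1)"
    using profile_deriv_bound by blast
  define C where "C = c * MX + B * M + 1"
  have "0 < C" unfolding C_def using c_nonneg MX(1) B(1) M(1) by (simp add: add_nonneg_pos)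
  moreover have "real k powr (s - 1) * \<bar>g0 k (\<Psi> \<sigma> (r / real k))\<bar>
      \<le> C * (r powr (s - 1) + r powr (s - 1 + \<alpha>))"
    if \<sigma>: "\<sigma> \<in> frontier \<Omega>" and r: "0 < r" "r < real k * \<epsilon>" for k \<sigma> r
  proof -
    define p where "p = \<Psi> \<sigma> (r / real k)"
    have k: "0 < real k" and "p \<in> closure \<Omega>"
      using Psi_scaled[OF \<sigma> r] closure_subset unfolding p_def by auto
    have "1 \<le> real k powr \<alpha>" using k \<alpha>_pos by (intro ge_one_powr_ge_zero) auto
    then have "real k powr (- \<alpha>) \<le> 1" by (simp add: powr_minus_divide divide_le_eq)
    then have "c * MX * r powr (s - 1 + \<alpha>) * real k powr (- \<alpha>) \<le> c * MX * r powr (s - 1 + \<alpha>)"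
      using c_nonneg MX(1) by (intro mult_left_le) auto
    with scaled_remainder_bound[OF \<sigma> r MX(2), folded p_def]
    have remainder: "\<bar>r powr s / real k * (1 - \<rho> r) * frechet_derivative \<psi> (at p) (X p)\<bar>
        \<le> c * MX * r powr (s - 1 + \<alpha>)" by linarith
    have main: "\<bar>profile_deriv r * \<psi> p * (G p \<bullet> X p)\<bar> \<le> B * r powr (s - 1) * M"
      unfolding abs_mult mult.assoc[of "profile_deriv r"]
      using B(2)[OF r(1)] M(2)[OF \<open>p \<in> closure \<Omega>\<close>] by (intro mult_mono) (auto simp: abs_mult)
    have "real k powr (s - 1) * \<bar>g0 k p\<bar> = \<bar>real k powr (s - 1) * g0 k p\<bar>"
      by (simp add: abs_mult)
    also have "\<dots> \<le> c * MX * r powr (s - 1 + \<alpha>) + B * r powr (s - 1) * M"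
      using scaled_cutoff_gradient[OF \<sigma> r, folded p_def] remainder main by linarith
    also have "\<dots> \<le> C * (r powr (s - 1) + r powr (s - 1 + \<alpha>))"
      unfolding C_def using c_nonneg MX(1) B(1) M(1) by (simp add: algebra_simps)
    finally show ?thesis unfolding p_def .
  qed
  ultimately show ?thesis by blast
qed

theorem scaled_cutoff_gradient_limit:
  assumes \<sigma>: "\<sigma> \<in> frontier \<Omega>" and r: "0 < r"
  shows "((\<lambda>k. real k powr (s - 1) * g0 k (\<Psi> \<sigma> (r / real k)))
           \<longlongrightarrow> deriv (\<lambda>r. max r 0 powr s * (1 - \<rho> r)) r * \<psi> \<sigma> * (X \<sigma> \<bullet> \<nu> \<sigma>)) sequentially"
proof -
  define p where "p k = \<Psi> \<sigma> (r / real k)" for k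
  define remainder where "remainder k =
    r powr s / real k * (1 - \<rho> r) * frechet_derivative \<psi> (at (p k)) (X (p k))" for k
  obtain MX where MX: "\<And>x. x \<in> closure \<Omega> \<Longrightarrow> norm (X x) \<le> MX"
    using bounded_on_closure[OF X_cont] by blast
  have large: "eventually (\<lambda>k. r < real k * \<epsilon>) sequentially"
  proof -
    obtain N :: nat where N: "r / \<epsilon> < real N" using reals_Archimedean2 by blast
    show ?thesis
    proof (rule eventually_sequentiallyI[of N])
      fix k assume "N \<le> k"
      then have "r / \<epsilon> < real k" using N by (meson less_le_trans of_nat_le_iff)
      then show "r < real k * \<epsilon>" using \<epsilon>_pos by (simp add: divide_less_eq)
    qed
  qed
  have p_lim: "p \<longlonglongrightarrow> \<sigma>"
    using tendsto_add[OF tendsto_const tendsto_scaleR[OF tendsto_divide_0[OF tendsto_const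
          filterlim_real_sequentially[THEN filterlim_at_top_imp_at_infinity]] tendsto_const]]
    unfolding p_def by simp
  have "eventually (\<lambda>k. p k \<in> closure \<Omega>) sequentially"
    using large by (rule eventually_mono) (use Psi_scaled(2)[OF \<sigma> r] closure_subset in \<open>force simp: p_def\<close>)
  moreover have "\<sigma> \<in> closure \<Omega>" using \<sigma> by (simp add: frontier_def)
  ultimately have \<psi>_lim: "(\<lambda>k. \<psi> (p k)) \<longlonglongrightarrow> \<psi> \<sigma>" and X_lim: "(\<lambda>k. X (p k)) \<longlonglongrightarrow> X \<sigma>"
    using continuous_on_tendsto_compose[OF _ p_lim] \<psi>_cont X_cont by blast+
  have G_lim: "(\<lambda>k. G (p k)) \<longlonglongrightarrow> G \<sigma>"
    using continuous_on_tendsto_compose[OF G_cont p_lim] by simp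
  have "(\<lambda>k. c * MX * r powr (s - 1 + \<alpha>) * real k powr (- \<alpha>)) \<longlonglongrightarrow> c * MX * r powr (s - 1 + \<alpha>) * 0"
    using \<alpha>_pos by (intro tendsto_mult tendsto_const tendsto_neg_powr filterlim_real_sequentially) auto
  moreover have "eventually (\<lambda>k. norm (remainder k) \<le> c * MX * r powr (s - 1 + \<alpha>) * real k powr (- \<alpha>)) sequentially"
    using large
  proof (rule eventually_mono)
    fix k assume "r < real k * \<epsilon>"
    from scaled_remainder_bound[OF \<sigma> r this MX]
    show "norm (remainder k) \<le> c * MX * r powr (s - 1 + \<alpha>) * real k powr (- \<alpha>)"
      unfolding remainder_def p_def by simp
  qed
  ultimately have "remainder \<longlonglongrightarrow> 0"
    using Lim_null_comparison by (metis mult_zero_right)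
  moreover have "(\<lambda>k. profile_deriv r * \<psi> (p k) * (G (p k) \<bullet> X (p k)))
      \<longlonglongrightarrow> profile_deriv r * \<psi> \<sigma> * (G \<sigma> \<bullet> X \<sigma>)"
    using \<psi>_lim G_lim X_lim by (intro tendsto_mult tendsto_inner tendsto_const)
  moreover have "eventually (\<lambda>k. remainder k + profile_deriv r * \<psi> (p k) * (G (p k) \<bullet> X (p k))
      = real k powr (s - 1) * g0 k (\<Psi> \<sigma> (r / real k))) sequentially"
    using large
  proof (rule eventually_mono)
    fix k assume "r < real k * \<epsilon>"
    from scaled_cutoff_gradient[OF \<sigma> r this]
    show "remainder k + profile_deriv r * \<psi> (p k) * (G (p k) \<bullet> X (p k))
      = real k powr (s - 1) * g0 k (\<Psi> \<sigma> (r / real k))"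
      unfolding remainder_def p_def by simp
  qed
  ultimately have "((\<lambda>k. real k powr (s - 1) * g0 k (\<Psi> \<sigma> (r / real k)))
      \<longlongrightarrow> 0 + profile_deriv r * \<psi> \<sigma> * (G \<sigma> \<bullet> X \<sigma>)) sequentially"
    using Lim_transform_eventually tendsto_add by fast
  then show ?thesis
    by (simp add: deriv_profile[OF r] normal_eq_gradient[OF \<sigma>] inner_commute)
qed

end

theorem lemma6p1:
  fixes \<Omega> :: "'a::euclidean_space set"
    and \<delta> :: "'a \<Rightarrow> real" and \<nu> :: "'a \<Rightarrow> 'a" and \<epsilon> :: real
    and \<rho> :: "real \<Rightarrow> real"
    and s \<alpha> c :: real and X :: "'a \<Rightarrow> 'a" and u \<psi> :: "'a \<Rightarrow> real"
  assumes s: "0 < s" "s < 1"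
    and dom: "bounded \<Omega>" "C11_domain \<Omega>"
    \<comment> \<open>the fixed function delta\<close>
    and delta_C11: "C11_global \<delta>"
    and delta_sdist: "\<exists>\<eta>>0. \<forall>x. infdist x (frontier \<Omega>) < \<eta> \<longrightarrow>
                         \<delta> x = infdist x (- \<Omega>) - infdist x \<Omega>"
    and delta_pos: "\<forall>x\<in>\<Omega>. \<delta> x > 0"
    and delta_neg: "\<forall>x. x \<notin> closure \<Omega> \<longrightarrow> \<delta> x < 0"
    \<comment> \<open>nu is the interior unit normal = gradient of the signed distance on the boundary\<close>
    and nu: "\<forall>\<sigma>\<in>frontier \<Omega>. (\<delta> has_derivative (\<lambda>v. \<nu> \<sigma> \<bullet> v)) (at \<sigma>)"
    \<comment> \<open>the fixed tubular-neighbourhood width epsilon_Omega\<close>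
    and eps: "\<epsilon> > 0"
    and Psi_bij: "bij_betw (\<lambda>(\<sigma>, r). \<sigma> + r *\<^sub>R \<nu> \<sigma>) (frontier \<Omega> \<times> {-\<epsilon><..<\<epsilon>})
                    {x. \<bar>\<delta> x\<bar> < \<epsilon>}"
    and Psi_bilip: "\<exists>L>0. \<forall>\<sigma>\<in>frontier \<Omega>. \<forall>\<sigma>'\<in>frontier \<Omega>. \<forall>r\<in>{-\<epsilon><..<\<epsilon>}. \<forall>r'\<in>{-\<epsilon><..<\<epsilon>}.
                 dist (\<sigma> + r *\<^sub>R \<nu> \<sigma>) (\<sigma>' + r' *\<^sub>R \<nu> \<sigma>') \<le> L * (dist \<sigma> \<sigma>' + \<bar>r - r'\<bar>) \<and>
                 dist \<sigma> \<sigma>' + \<bar>r - r'\<bar> \<le> L * dist (\<sigma> + r *\<^sub>R \<nu> \<sigma>) (\<sigma>' + r' *\<^sub>R \<nu> \<sigma>')"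
    and Psi_delta: "\<forall>\<sigma>\<in>frontier \<Omega>. \<forall>r\<in>{-\<epsilon><..<\<epsilon>}. \<delta> (\<sigma> + r *\<^sub>R \<nu> \<sigma>) = r"
    \<comment> \<open>the fixed cut-off rho \<in> C_c^\<infinity>((-2,2))\<close>
    and rho_smooth: "smooth_real \<rho>"
    and rho_supp: "closure {t. \<rho> t \<noteq> 0} \<subseteq> {-2<..<2}"
    and rho_range: "\<forall>t. 0 \<le> \<rho> t \<and> \<rho> t \<le> 1"
    and rho_one: "\<forall>t\<in>{-1<..<1}. \<rho> t = 1"
    \<comment> \<open>the data of the lemma\<close>
    and X_cont: "continuous_on (closure \<Omega>) X"
    and u_Cs: "in_C_alpha s (closure \<Omega>) u"
    and u_C1: "C1_on \<Omega> u"
    and u_zero: "\<forall>x. x \<notin> \<Omega> \<longrightarrow> u x = 0"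
    and psi_def: "\<forall>x\<in>\<Omega>. \<psi> x = u x / \<delta> x powr s"
    and psi_ext: "continuous_on (closure \<Omega>) \<psi>"
    and alpha: "0 < \<alpha>" "\<alpha> < 1" and c: "c > 0"
    and psi_norm: "C_alpha_norm_le \<alpha> (closure \<Omega>) \<psi> c"
    and psi_grad: "\<forall>x\<in>\<Omega>. \<psi> differentiable (at x) \<and>
                     (\<forall>v. \<bar>frechet_derivative \<psi> (at x) v\<bar> \<le> c * \<delta> x powr (\<alpha> - 1) * norm v)"
  shows "let U = (\<lambda>(k::nat) x. u x * (1 - \<rho> (real k * \<delta> x)));
             g = (\<lambda>k x. frechet_derivative (U k) (at x) (X x));
             h = (\<lambda>r::real. (max r 0) powr s * (1 - \<rho> r))
         in (\<exists>C>0. \<forall>k::nat. \<forall>\<sigma>\<in>frontier \<Omega>. \<forall>r. 0 < r \<and> r < real k * \<epsilon> \<longrightarrow>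
                real k powr (s - 1) * \<bar>g k (\<sigma> + (r / real k) *\<^sub>R \<nu> \<sigma>)\<bar>
                  \<le> C * (r powr (s - 1) + r powr (s - 1 + \<alpha>)))
          \<and> (\<forall>\<sigma>\<in>frontier \<Omega>. \<forall>r>0.
                ((\<lambda>k. real k powr (s - 1) * g k (\<sigma> + (r / real k) *\<^sub>R \<nu> \<sigma>))
                   \<longlongrightarrow> deriv h r * \<psi> \<sigma> * (X \<sigma> \<bullet> \<nu> \<sigma>)) sequentially)"
proof -
  obtain D where D0: "D 0 = \<rho>" and D: "\<And>n x. (D n has_real_derivative D (Suc n) x) (at x)"
    using rho_smooth unfolding smooth_real_def by blast
  obtain G L where G: "\<And>x. (\<delta> has_derivative (\<lambda>v. G x \<bullet> v)) (at x)"
      and G_lipschitz: "\<And>x y. norm (G x - G y) \<le> L * dist x y"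
    using delta_C11 unfolding C11_global_def by blast
  obtain \<eta> where \<eta>: "0 < \<eta>" "\<And>x. infdist x (frontier \<Omega>) < \<eta> \<Longrightarrow> \<delta> x = infdist x (- \<Omega>) - infdist x \<Omega>"
    using delta_sdist by blast
  have "open \<Omega>" using dom(2) unfolding C11_domain_def by blast
  \<comment> \<open>Not needed: \<open>Psi_bij\<close>, \<open>Psi_bilip\<close>, \<open>rho_one\<close>, \<open>u_Cs\<close>, \<open>u_C1\<close>, \<open>u_zero\<close>,
    \<open>psi_norm\<close>, \<open>s < 1\<close>, \<open>\<alpha> < 1\<close>; continuity of \<open>\<psi>\<close> on the compact \<open>closure \<Omega>\<close> bounds it.\<close>
  interpret boundary_cutoff \<Omega> \<delta> G \<nu> \<epsilon> \<rho> "D 1" s \<alpha> c X u \<psi>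
  proof
    have "dist (G x) (G y) \<le> \<bar>L\<bar> * dist x y" for x y
      using G_lipschitz[of x y] mult_right_mono[OF abs_ge_self zero_le_dist, of L x y]
      by (simp add: dist_norm)
    then have "\<bar>L\<bar>-lipschitz_on UNIV G" by (simp add: lipschitz_on_def)
    then show "continuous_on UNIV G" by (rule lipschitz_on_continuous_on)
    show "\<sigma> + t *\<^sub>R \<nu> \<sigma> \<in> \<Omega> \<and> \<delta> (\<sigma> + t *\<^sub>R \<nu> \<sigma>) = t" if "\<sigma> \<in> frontier \<Omega>" "0 < t" "t < \<epsilon>" for \<sigma> t
      using Psi_delta that signed_distance_pos_imp_mem[OF \<open>open \<Omega>\<close> \<eta> delta_neg[rule_format]] by auto
    show "continuous_on {0..2} (D 1)"
      using D by (intro continuous_at_imp_continuous_on) (auto intro: DERIV_isCont)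
    show "D 1 t = 0" if "2 \<le> t" for t
    proof -
      have "t \<notin> closure {x. \<rho> x \<noteq> 0}" using rho_supp that by force
      with has_real_derivative_outside_support[OF D[of 0 t, unfolded D0]] show ?thesis by simp
    qed
    show "u x = \<psi> x * \<delta> x powr s" if "x \<in> \<Omega>" for x
      using psi_def delta_pos that by force
  qed (use \<open>open \<Omega>\<close> dom(1) G nu eps D[of 0, unfolded D0] rho_range s alpha c X_cont psi_ext psi_grad
       in auto)
  show ?thesis
    unfolding Let_def using scaled_cutoff_gradient_bound scaled_cutoff_gradient_limit by blast
qed

end
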